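(* For any schema $\mathrm{Sch}$ with constraints $\Sigma$ and result-bounded methods, a Boolean conjunctive query $Q$ is access monotonically-determined over $\mathrm{Sch}$ if and only if the following holds: for any two instances $I_1,I_2$ satisfying $\Sigma$, if $I_1$ and $I_2$ have a common subinstance $I_{\mathrm{acc}}$ that is access-valid in $I_1$, then $Q(I_1)\subseteq Q(I_2)$.
   Context: Instances are finite or infinite sets of facts; $\mathrm{Adom}(I)$ is the set of values occurring in $I$; a subinstance is a subset of the facts. A schema $\mathrm{Sch}$ consists of a relational signature, constraints $\Sigma$ (first-order sentences), and access methods; each method $\mathrm{mt}$ is associated with a relation $R$ and a set of input positions of $R$ and may have a result bound $k\in\mathbb{N}_{>0}$. An access on $I$ is $(\mathrm{mt},\mathrm{AccBind})$ with $\mathrm{AccBind}$ mapping the input positions of $\mathrm{mt}$ to $\mathrm{Adom}(I)$; matching tuples $M$ are the $R$-tuples of $I$ agreeing with $\mathrm{AccBind}$ on the input positions. $J\subseteq M$ is a valid output if $J=M$ when there is no bound, and when there is result bound $k$, $|J|\le k$ and for all $j\le k$, $|M|\ge j$ implies $|J|\ge j$. An access selection maps each access to matching tuples; it is valid if all its images are valid outputs. For a valid access selection $\sigma$ on $I$: $\mathrm{AccPart}_0=\mathrm{accessible}_0=\emptyset$; $\mathrm{AccPart}_{i+1}$ is the union of the facts $\sigma(\mathrm{mt},\mathrm{AccBind})$ over all methods and all bindings with values in $\mathrm{accessible}_i$; $\mathrm{accessible}_{i+1}=\mathrm{Adom}(\mathrm{AccPart}_{i+1})$; an accessible part of $I$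 is $\bigcup_i\mathrm{AccPart}_i$ for some valid $\sigma$. $Q$ is access monotonically-determined over $\mathrm{Sch}$ if for all $I_1,I_2$ satisfying $\Sigma$, whenever some accessible part of $I_1$ is a subset of some accessible part of $I_2$, $Q(I_1)\subseteq Q(I_2)$. A subinstance $I_{\mathrm{acc}}$ of $I_1$ is access-valid in $I_1$ if for every access $(\mathrm{mt},\mathrm{AccBind})$ with a method of $\mathrm{Sch}$ and a binding with values in $\mathrm{Adom}(I_{\mathrm{acc}})$, there is a set $J$ of matching tuples contained in $I_{\mathrm{acc}}$ that is a valid output to that access in $I_1$. *)

theory Defs
  imports Main
begin

type_synonym ('r, 'v) fact = "'r \<times> 'v list"
type_synonym ('r, 'v) inst = "('r, 'v) fact set"

definition adom :: "('r, 'v) inst \<Rightarrow> 'v set" where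
  "adom I = (\<Union>(R, t) \<in> I. set t)"

datatype 'v fterm = Var nat | Cst 'v

datatype ('r, 'v) fo =
    Atom 'r "'v fterm list"
  | Eq "'v fterm" "'v fterm"
  | Neg "('r, 'v) fo"
  | Conj "('r, 'v) fo" "('r, 'v) fo"
  | Ex nat "('r, 'v) fo"

fun tval :: "(nat \<Rightarrow> 'v) \<Rightarrow> 'v fterm \<Rightarrow> 'v" where
  "tval e (Var x) = e x"
| "tval e (Cst c) = c"

fun tvars :: "'v fterm \<Rightarrow> nat set" where
  "tvars (Var x) = {x}"
| "tvars (Cst c) = {}"

fun fv :: "('r, 'v) fo \<Rightarrow> nat set" where
  "fv (Atom R ts) = (\<Union>t \<in> set ts. tvars t)"
| "fv (Eq s t) = tvars s \<union> tvars t"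
| "fv (Neg \<phi>) = fv \<phi>"
| "fv (Conj \<phi> \<psi>) = fv \<phi> \<union> fv \<psi>"
| "fv (Ex x \<phi>) = fv \<phi> - {x}"

definition sentence :: "('r, 'v) fo \<Rightarrow> bool" where
  "sentence \<phi> \<longleftrightarrow> fv \<phi> = {}"

fun holds :: "('r, 'v) inst \<Rightarrow> (nat \<Rightarrow> 'v) \<Rightarrow> ('r, 'v) fo \<Rightarrow> bool" where
  "holds I e (Atom R ts) \<longleftrightarrow> (R, map (tval e) ts) \<in> I"
| "holds I e (Eq s t) \<longleftrightarrow> tval e s = tval e t"
| "holds I e (Neg \<phi>) \<longleftrightarrow> \<not> holds I e \<phi>"
| "holds I e (Conj \<phi> \<psi>) \<longleftrightarrow> holds I e \<phi> \<and> holds I e \<psi>"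
| "holds I e (Ex x \<phi>) \<longleftrightarrow> (\<exists>a \<in> adom I. holds I (e(x := a)) \<phi>)"

record ('r, 'v, 'm) schema =
  arity :: "'r \<Rightarrow> nat"
  constraints :: "('r, 'v) fo set"
  methods :: "'m set"
  mrel :: "'m \<Rightarrow> 'r"
  minputs :: "'m \<Rightarrow> nat set"
  mbound :: "'m \<Rightarrow> nat option"

definition wf_schema :: "('r, 'v, 'm) schema \<Rightarrow> bool" where
  "wf_schema S \<longleftrightarrow>
     (\<forall>\<phi> \<in> constraints S. sentence \<phi>) \<and>
     (\<forall>m \<in> methods S. minputs S m \<subseteq> {..< arity S (mrel S m)} \<and>
                      (\<forall>k. mbound S m = Some k \<longrightarrow> k > 0))"

definition is_instance :: "('r, 'v, 'm) schema \<Rightarrow> ('r, 'v) inst \<Rightarrow> bool" where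
  "is_instance S I \<longleftrightarrow> (\<forall>(R, t) \<in> I. length t = arity S R)"

definition satisfies :: "('r, 'v, 'm) schema \<Rightarrow> ('r, 'v) inst \<Rightarrow> bool" where
  "satisfies S I \<longleftrightarrow> (\<forall>\<phi> \<in> constraints S. \<forall>e. holds I e \<phi>)"

definition binding :: "('r, 'v, 'm) schema \<Rightarrow> 'm \<Rightarrow> 'v set \<Rightarrow> (nat \<rightharpoonup> 'v) \<Rightarrow> bool" where
  "binding S m A b \<longleftrightarrow> dom b = minputs S m \<and> ran b \<subseteq> A"

definition matching :: "('r, 'v, 'm) schema \<Rightarrow> ('r, 'v) inst \<Rightarrow> 'm \<Rightarrow> (nat \<rightharpoonup> 'v)
    \<Rightarrow> ('r, 'v) inst" where
  "matching S I m b = {(R, t) \<in> I. R = mrel S m \<and> (\<forall>i \<in> minputs S m. b i = Some (t ! i))}"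

text \<open>|M| \<ge> j, also meaningful for infinite M.\<close>
definition card_ge :: "'a set \<Rightarrow> nat \<Rightarrow> bool" where
  "card_ge M j \<longleftrightarrow> (\<exists>S \<subseteq> M. finite S \<and> card S = j)"

definition valid_output :: "nat option \<Rightarrow> 'a set \<Rightarrow> 'a set \<Rightarrow> bool" where
  "valid_output bd M J \<longleftrightarrow> J \<subseteq> M \<and>
     (case bd of
        None \<Rightarrow> J = M
      | Some k \<Rightarrow> finite J \<and> card J \<le> k \<and> (\<forall>j \<le> k. card_ge M j \<longrightarrow> card J \<ge> j))"

type_synonym ('r, 'v, 'm) selection = "'m \<Rightarrow> (nat \<rightharpoonup> 'v) \<Rightarrow> ('r, 'v) inst"

definition valid_selection :: "('r, 'v, 'm) schema \<Rightarrow> ('r, 'v) inst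
    \<Rightarrow> ('r, 'v, 'm) selection \<Rightarrow> bool" where
  "valid_selection S I \<sigma> \<longleftrightarrow>
     (\<forall>m \<in> methods S. \<forall>b. binding S m (adom I) b \<longrightarrow>
        valid_output (mbound S m) (matching S I m b) (\<sigma> m b))"

fun accpart :: "('r, 'v, 'm) schema \<Rightarrow> ('r, 'v, 'm) selection \<Rightarrow> nat \<Rightarrow> ('r, 'v) inst" where
  "accpart S \<sigma> 0 = {}"
| "accpart S \<sigma> (Suc i) =
     (\<Union>{\<sigma> m b | m b. m \<in> methods S \<and> binding S m (adom (accpart S \<sigma> i)) b})"

definition accessible_part :: "('r, 'v, 'm) schema \<Rightarrow> ('r, 'v) inst
    \<Rightarrow> ('r, 'v) inst \<Rightarrow> bool" where
  "accessible_part S I A \<longleftrightarrow>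
     (\<exists>\<sigma>. valid_selection S I \<sigma> \<and> A = (\<Union>i. accpart S \<sigma> i))"

type_synonym ('r, 'v) bcq = "('r \<times> 'v fterm list) list"

definition cq_holds :: "('r, 'v) bcq \<Rightarrow> ('r, 'v) inst \<Rightarrow> bool" where
  "cq_holds Q I \<longleftrightarrow> (\<exists>e. \<forall>(R, ts) \<in> set Q. (R, map (tval e) ts) \<in> I)"

definition access_mon_det :: "('r, 'v, 'm) schema \<Rightarrow> ('r, 'v) bcq \<Rightarrow> bool" where
  "access_mon_det S Q \<longleftrightarrow>
     (\<forall>I1 I2. is_instance S I1 \<and> is_instance S I2 \<and> satisfies S I1 \<and> satisfies S I2 \<and>
        (\<exists>A1 A2. accessible_part S I1 A1 \<and> accessible_part S I2 A2 \<and> A1 \<subseteq> A2)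
        \<longrightarrow> (cq_holds Q I1 \<longrightarrow> cq_holds Q I2))"

definition access_valid :: "('r, 'v, 'm) schema \<Rightarrow> ('r, 'v) inst
    \<Rightarrow> ('r, 'v) inst \<Rightarrow> bool" where
  "access_valid S I1 Iacc \<longleftrightarrow> Iacc \<subseteq> I1 \<and>
     (\<forall>m \<in> methods S. \<forall>b. binding S m (adom Iacc) b \<longrightarrow>
        (\<exists>J. J \<subseteq> Iacc \<and> valid_output (mbound S m) (matching S I1 m b) J))"

end

theory Submission
  imports Defs
begin

text \<open>If some accessible part of \<open>I\<^sub>1\<close> is contained in one of \<open>I\<^sub>2\<close>, then it is a common
  subinstance, and it is access-valid in \<open>I\<^sub>1\<close> because it is closed under the accesses of
  the selection that produced it (bindings use finitely many values, which all appear
  at some finite stage). Conversely, an access-valid common subinstance \<open>Iacc\<close> lets us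
  choose every access on \<open>I\<^sub>1\<close> over \<open>Iacc\<close> inside \<open>Iacc\<close>; since \<open>Iacc \<subseteq> I\<^sub>2\<close>, each such
  output extends to a valid output of the same access on \<open>I\<^sub>2\<close>, and by induction on the
  stages the resulting accessible part of \<open>I\<^sub>1\<close> is contained in that of \<open>I\<^sub>2\<close>.\<close>

lemma adom_mono: "A \<subseteq> B \<Longrightarrow> adom A \<subseteq> adom B"
  unfolding adom_def by blast

lemma adom_UN: "adom (\<Union>i. A i) = (\<Union>i. adom (A i))"
  unfolding adom_def by blast

lemma binding_mono: "binding S m A b \<Longrightarrow> A \<subseteq> B \<Longrightarrow> binding S m B b"
  unfolding binding_def by blast

lemma finite_ran_binding:
  assumes "wf_schema S" "m \<in> methods S" "binding S m A b"
  shows "finite (ran b)"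
proof -
  have "dom b \<subseteq> {..< arity S (mrel S m)}"
    using assms unfolding wf_schema_def binding_def by blast
  then show ?thesis
    by (intro finite_ran) (rule finite_subset, auto)
qed

lemma matching_subset: "matching S I m b \<subseteq> I"
  unfolding matching_def by blast

lemma matching_Int_subset: "matching S I m b \<inter> I' \<subseteq> matching S I' m b"
  unfolding matching_def by blast

lemma card_ge_iff: "card_ge M j \<longleftrightarrow> infinite M \<or> j \<le> card M"
proof
  assume "card_ge M j"
  then obtain T where "T \<subseteq> M" "card T = j" "finite T"
    unfolding card_ge_def by blast
  then show "infinite M \<or> j \<le> card M"
    using card_mono by blast
next
  assume "infinite M \<or> j \<le> card M"
  then show "card_ge M j"
    unfolding card_ge_def
    by (metis infinite_arbitrarily_large obtain_subset_with_card_n)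
qed

lemma valid_output_subset: "valid_output bd M J \<Longrightarrow> J \<subseteq> M"
  unfolding valid_output_def by blast

lemma valid_output_extend:
  assumes "J\<^sub>0 \<subseteq> M" and bounded: "\<And>k. bd = Some k \<Longrightarrow> finite J\<^sub>0 \<and> card J\<^sub>0 \<le> k"
  shows "\<exists>J. J\<^sub>0 \<subseteq> J \<and> valid_output bd M J"
proof (cases bd)
  case None
  then show ?thesis
    using assms unfolding valid_output_def by auto
next
  case (Some k)
  show ?thesis
  proof (cases "card_ge M k")
    case True
    then obtain T where T: "T \<subseteq> M" "finite T" "card T = k"
      unfolding card_ge_def by blast
    have "k \<le> card (J\<^sub>0 \<union> T)"
      using T bounded[OF Some] by (metis card_mono finite_Un sup_ge2)
    then obtain J where "J\<^sub>0 \<subseteq> J" "J \<subseteq> J\<^sub>0 \<union> T" "card J = k"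
      using exists_subset_between[of J\<^sub>0 k "J\<^sub>0 \<union> T"] T bounded[OF Some] by auto
    moreover from this have "finite J"
      using T bounded[OF Some] finite_subset by blast
    ultimately show ?thesis
      using T \<open>J\<^sub>0 \<subseteq> M\<close> Some unfolding valid_output_def by (intro exI[of _ J]) auto
  next
    case False
    then have "finite M" "card M < k"
      by (auto simp: card_ge_iff)
    then show ?thesis
      using Some \<open>J\<^sub>0 \<subseteq> M\<close> unfolding valid_output_def card_ge_iff
      by (intro exI[of _ M]) auto
  qed
qed

lemma valid_output_exists: "\<exists>J. valid_output bd M J"
  using valid_output_extend[of "{}" M bd] by auto

lemma valid_output_transfer:
  assumes "valid_output bd M J\<^sub>0" "J\<^sub>0 \<subseteq> M'"
  shows "\<exists>J. J\<^sub>0 \<subseteq> J \<and> valid_output bd M' J"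
  using assms by (intro valid_output_extend) (auto simp: valid_output_def)

lemma accpart_Suc_upper:
  "m \<in> methods S \<Longrightarrow> binding S m (adom (accpart S \<sigma> i)) b \<Longrightarrow> \<sigma> m b \<subseteq> accpart S \<sigma> (Suc i)"
  by auto

lemma accpart_Suc_least:
  "(\<And>m b. m \<in> methods S \<Longrightarrow> binding S m (adom (accpart S \<sigma> i)) b \<Longrightarrow> \<sigma> m b \<subseteq> X)
    \<Longrightarrow> accpart S \<sigma> (Suc i) \<subseteq> X"
  by auto

lemma mono_accpart: "mono (accpart S \<sigma>)"
  unfolding mono_iff_le_Suc
proof
  fix i show "accpart S \<sigma> i \<subseteq> accpart S \<sigma> (Suc i)"
  proof (induction i)
    case (Suc i)
    show ?case
    proof (rule accpart_Suc_least)
      fix m b assume "m \<in> methods S" "binding S m (adom (accpart S \<sigma> i)) b"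
      then show "\<sigma> m b \<subseteq> accpart S \<sigma> (Suc (Suc i))"
        by (meson accpart_Suc_upper binding_mono adom_mono Suc.IH)
    qed
  qed simp
qed

lemma accpart_subset:
  assumes "valid_selection S I \<sigma>"
  shows "accpart S \<sigma> i \<subseteq> I"
proof (induction i)
  case (Suc i)
  show ?case
  proof (rule accpart_Suc_least)
    fix m b assume m: "m \<in> methods S" and b: "binding S m (adom (accpart S \<sigma> i)) b"
    have "valid_output (mbound S m) (matching S I m b) (\<sigma> m b)"
      using assms m binding_mono[OF b adom_mono[OF Suc.IH]] unfolding valid_selection_def by simp
    from valid_output_subset[OF this] matching_subset show "\<sigma> m b \<subseteq> I"
      by (rule subset_trans)
  qed
qed simp

lemma accessible_part_subset: "accessible_part S I A \<Longrightarrow> A \<subseteq> I"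
  unfolding accessible_part_def using accpart_subset by blast

lemma finite_subset_UN_mono:
  fixes X :: "nat \<Rightarrow> 'a set"
  assumes "mono X" "finite F" "F \<subseteq> (\<Union>i. X i)"
  obtains i where "F \<subseteq> X i"
proof -
  have "X i \<subseteq> X j \<or> X j \<subseteq> X i" for i j
    using assms(1) nat_le_linear[of i j] by (metis monoD)
  then have "subset.chain UNIV (range X)"
    unfolding subset.chain_def by blast
  then show ?thesis
    using finite_subset_Union_chain[of F "range X" UNIV] assms(2,3) that by blast
qed

lemma accessible_part_access_valid:
  assumes "wf_schema S" "accessible_part S I A"
  shows "access_valid S I A"
proof -
  obtain \<sigma> where \<sigma>: "valid_selection S I \<sigma>" and A: "A = (\<Union>i. accpart S \<sigma> i)"
    using assms(2) unfolding accessible_part_def by blast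
  have "A \<subseteq> I"
    using accpart_subset[OF \<sigma>] A by blast
  show ?thesis
    unfolding access_valid_def
  proof (intro conjI ballI allI impI)
    fix m b assume m: "m \<in> methods S" and b: "binding S m (adom A) b"
    have "mono (\<lambda>i. adom (accpart S \<sigma> i))"
      by (intro monoI adom_mono monoD[OF mono_accpart])
    moreover have "ran b \<subseteq> (\<Union>i. adom (accpart S \<sigma> i))"
      using b unfolding A adom_UN binding_def by (elim conjE)
    ultimately obtain i where "ran b \<subseteq> adom (accpart S \<sigma> i)"
      by (rule finite_subset_UN_mono[OF _ finite_ran_binding[OF assms(1) m b]])
    then have "binding S m (adom (accpart S \<sigma> i)) b"
      using b unfolding binding_def by blast
    then have "\<sigma> m b \<subseteq> accpart S \<sigma> (Suc i)"
      by (rule accpart_Suc_upper[OF m])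
    moreover have "valid_output (mbound S m) (matching S I m b) (\<sigma> m b)"
      using \<sigma> m binding_mono[OF b adom_mono[OF \<open>A \<subseteq> I\<close>]] unfolding valid_selection_def by simp
    ultimately show "\<exists>J \<subseteq> A. valid_output (mbound S m) (matching S I m b) J"
      unfolding A by blast
  qed (fact \<open>A \<subseteq> I\<close>)
qed

lemma accpart_subset_accpart:
  assumes "\<And>m b. m \<in> methods S \<Longrightarrow> binding S m (adom Iacc) b
      \<Longrightarrow> \<sigma>\<^sub>1 m b \<subseteq> Iacc \<and> \<sigma>\<^sub>1 m b \<subseteq> \<sigma>\<^sub>2 m b"
  shows "accpart S \<sigma>\<^sub>1 i \<subseteq> Iacc \<inter> accpart S \<sigma>\<^sub>2 i"
proof (induction i)
  case (Suc i)
  show ?case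
  proof (rule accpart_Suc_least)
    fix m b assume m: "m \<in> methods S" and b: "binding S m (adom (accpart S \<sigma>\<^sub>1 i)) b"
    have "binding S m (adom Iacc) b" "binding S m (adom (accpart S \<sigma>\<^sub>2 i)) b"
      using binding_mono[OF b adom_mono] Suc.IH by auto
    then show "\<sigma>\<^sub>1 m b \<subseteq> Iacc \<inter> accpart S \<sigma>\<^sub>2 (Suc i)"
      using assms[OF m] accpart_Suc_upper[OF m] by blast
  qed
qed simp

lemma access_valid_imp_accessible_parts_subset:
  assumes valid: "access_valid S I\<^sub>1 Iacc" and "Iacc \<subseteq> I\<^sub>2"
  shows "\<exists>A\<^sub>1 A\<^sub>2. accessible_part S I\<^sub>1 A\<^sub>1 \<and> accessible_part S I\<^sub>2 A\<^sub>2 \<and> A\<^sub>1 \<subseteq> A\<^sub>2"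
proof -
  define P where "P m b \<longleftrightarrow> m \<in> methods S \<and> binding S m (adom Iacc) b" for m b
  have "\<exists>J. (P m b \<longrightarrow> J \<subseteq> Iacc) \<and> valid_output (mbound S m) (matching S I\<^sub>1 m b) J" for m b
  proof (cases "P m b")
    case True
    then show ?thesis
      using valid unfolding P_def access_valid_def by blast
  qed (use valid_output_exists in blast)
  then obtain \<sigma>\<^sub>1 where \<sigma>\<^sub>1: "\<And>m b. (P m b \<longrightarrow> \<sigma>\<^sub>1 m b \<subseteq> Iacc)
      \<and> valid_output (mbound S m) (matching S I\<^sub>1 m b) (\<sigma>\<^sub>1 m b)"
    by metis
  have "\<exists>J. (P m b \<longrightarrow> \<sigma>\<^sub>1 m b \<subseteq> J) \<and> valid_output (mbound S m) (matching S I\<^sub>2 m b) J" for m b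
  proof (cases "P m b")
    case True
    have "\<sigma>\<^sub>1 m b \<subseteq> matching S I\<^sub>1 m b \<inter> I\<^sub>2"
      using \<sigma>\<^sub>1[of m b] True \<open>Iacc \<subseteq> I\<^sub>2\<close> valid_output_subset[OF conjunct2[OF \<sigma>\<^sub>1]] by blast
    then have "\<sigma>\<^sub>1 m b \<subseteq> matching S I\<^sub>2 m b"
      using matching_Int_subset by (rule subset_trans)
    from valid_output_transfer[OF conjunct2[OF \<sigma>\<^sub>1] this] show ?thesis
      by blast
  qed (use valid_output_exists in blast)
  then obtain \<sigma>\<^sub>2 where \<sigma>\<^sub>2: "\<And>m b. (P m b \<longrightarrow> \<sigma>\<^sub>1 m b \<subseteq> \<sigma>\<^sub>2 m b)
      \<and> valid_output (mbound S m) (matching S I\<^sub>2 m b) (\<sigma>\<^sub>2 m b)"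
    by metis
  have "valid_selection S I\<^sub>1 \<sigma>\<^sub>1" "valid_selection S I\<^sub>2 \<sigma>\<^sub>2"
    unfolding valid_selection_def using \<sigma>\<^sub>1 \<sigma>\<^sub>2 by blast+
  then have "accessible_part S I\<^sub>1 (\<Union>i. accpart S \<sigma>\<^sub>1 i)" "accessible_part S I\<^sub>2 (\<Union>i. accpart S \<sigma>\<^sub>2 i)"
    unfolding accessible_part_def by blast+
  moreover have "accpart S \<sigma>\<^sub>1 i \<subseteq> Iacc \<inter> accpart S \<sigma>\<^sub>2 i" for i
    by (rule accpart_subset_accpart) (use \<sigma>\<^sub>1 \<sigma>\<^sub>2 in \<open>auto simp: P_def\<close>)
  then have "(\<Union>i. accpart S \<sigma>\<^sub>1 i) \<subseteq> (\<Union>i. accpart S \<sigma>\<^sub>2 i)"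
    by blast
  ultimately show ?thesis
    by blast
qed

lemma accessible_parts_subset_iff_access_valid_common:
  assumes "wf_schema S"
  shows "(\<exists>A\<^sub>1 A\<^sub>2. accessible_part S I\<^sub>1 A\<^sub>1 \<and> accessible_part S I\<^sub>2 A\<^sub>2 \<and> A\<^sub>1 \<subseteq> A\<^sub>2)
    \<longleftrightarrow> (\<exists>Iacc. Iacc \<subseteq> I\<^sub>1 \<and> Iacc \<subseteq> I\<^sub>2 \<and> access_valid S I\<^sub>1 Iacc)"
proof
  assume "\<exists>A\<^sub>1 A\<^sub>2. accessible_part S I\<^sub>1 A\<^sub>1 \<and> accessible_part S I\<^sub>2 A\<^sub>2 \<and> A\<^sub>1 \<subseteq> A\<^sub>2"
  then obtain A\<^sub>1 A\<^sub>2 where "accessible_part S I\<^sub>1 A\<^sub>1" "accessible_part S I\<^sub>2 A\<^sub>2" "A\<^sub>1 \<subseteq> A\<^sub>2"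
    by blast
  then have "A\<^sub>1 \<subseteq> I\<^sub>1" "A\<^sub>1 \<subseteq> I\<^sub>2" "access_valid S I\<^sub>1 A\<^sub>1"
    using accessible_part_subset accessible_part_access_valid[OF assms] by blast+
  then show "\<exists>Iacc. Iacc \<subseteq> I\<^sub>1 \<and> Iacc \<subseteq> I\<^sub>2 \<and> access_valid S I\<^sub>1 Iacc"
    by blast
qed (use access_valid_imp_accessible_parts_subset in blast)

theorem mainTheorem3:
  fixes S :: "('r, 'v, 'm) schema" and Q :: "('r, 'v) bcq"
  assumes "wf_schema S"
  shows "access_mon_det S Q \<longleftrightarrow>
    (\<forall>I1 I2 Iacc. is_instance S I1 \<and> is_instance S I2 \<and> satisfies S I1 \<and> satisfies S I2 \<and>
       Iacc \<subseteq> I1 \<and> Iacc \<subseteq> I2 \<and> access_valid S I1 Iacc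
       \<longrightarrow> (cq_holds Q I1 \<longrightarrow> cq_holds Q I2))"
  unfolding access_mon_det_def accessible_parts_subset_iff_access_valid_common[OF assms]
  by blast

end
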